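(* Let $X=\bigsqcup_{\lambda\in\Lambda}G_\lambda$ be an MCQ, $R$ a ring, $M$ a left $R$-module, and let $(f_1,f_2,f_3,f_4;\phi_1,\phi_2)$ be a 6-tuple of maps ($f_1,f_2:X\times X\to R$, $f_3,f_4:\bigsqcup_\lambda(G_\lambda\times G_\lambda)\to R$, $\phi_1:X\times X\to M$, $\phi_2:\bigsqcup_\lambda(G_\lambda\times G_\lambda)\to M$) satisfying conditions (0-i)–(4-$\phi$). Define $g_1,g_2:X\times X\to R$, $g_3,g_4:\bigsqcup_\lambda(G_\lambda\times G_\lambda)\to R$, $\psi_1:X\times X\to M$, $\psi_2:\bigsqcup_\lambda(G_\lambda\times G_\lambda)\to M$ by $g_1(x,y)=f_1(e_x,y)$, $g_2(x,y)=f_3(x\triangleleft y,\,x^{-1}\triangleleft y)\,f_2(x,y)\,f_3(e_y,y)$, $g_3(a,b)=1$, $g_4(a,b)=f_1(e_a,a^{-1})$, $\psi_1(x,y)=f_3(x\triangleleft y,\,x^{-1}\triangleleft y)\,\phi_1(x,y)$, $\psi_2(a,b)=f_3(ab,\,b^{-1}a^{-1})\,\phi_2(a,b)$. Then the 6-tuple $(g_1,g_2,g_3,g_4;\psi_1,\psi_2)$ also satisfies conditions (0-i)–(4-$\phi$).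
   Context: A multiple conjugation quandle (MCQ) is a set $X=\bigsqcup_{\lambda\in\Lambda}G_\lambda$ that is a disjoint union of groups $G_\lambda$, together with a binary operation $\triangleleft:X\times X\to X$ such that: (i) for all $a,b\in G_\lambda$, $a\triangleleft b=b^{-1}ab$; (ii) for all $x\in X$ and $a,b\in G_\lambda$, $x\triangleleft e_\lambda=x$ and $x\triangleleft(ab)=(x\triangleleft a)\triangleleft b$, where $e_\lambda$ is the identity of $G_\lambda$; (iii) for all $x,y,z\in X$, $(x\triangleleft y)\triangleleft z=(x\triangleleft z)\triangleleft(y\triangleleft z)$; (iv) for all $x\in X$ and $a,b\in G_\lambda$, the elements $a\triangleleft x$ and $b\triangleleft x$ lie in a common group $G_\mu$ and $(ab)\triangleleft x=(a\triangleleft x)(b\triangleleft x)$. For $x\in X$, $G_x$ denotes the group containing $x$, $e_x$ its identity, $x^{-1}$ the inverse of $x$ in $G_x$. $\bigsqcup_{\lambda}(G_\lambda\times G_\lambda)$ is the set of pairs of elements lying in a common group $G_\lambda$. Rings have a multiplicative identity $1\neq0$ and need not be commutative. Conditions (0-i)–(4-$\phi$) on a 6-tuple $(f_1,f_2,f_3,f_4;\phi_1,\phi_2)$: For all $\lambda$ and $a,b,c\in G_\lambda$: (0-i) $f_3(a,b)$, $f_4(a,b)$ invertible; (0-ii) $f_3(ab,c)f_3(a,b)=f_3(a,bc)$; (0-iii) $f_3(ab,c)f_4(a,b)=f_4(a,bc)f_3(b,c)$; (0-iv) $f_4(ab,c)=f_4(a,bc)f_4(b,c)$; (0-$\phi$)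 $f_3(ab,c)\phi_2(a,b)+\phi_2(ab,c)=f_4(a,bc)\phi_2(b,c)+\phi_2(a,bc)$. For all $a,b\in G_\lambda$: (1-i) $f_1(a,b)=f_4(b^{-1},ab)f_3(a,b)$; (1-ii) $f_3(b,b^{-1}ab)+f_4(b,b^{-1}ab)f_2(a,b)=f_4(a,b)$; (1-$\phi$) $f_4(b,b^{-1}ab)\phi_1(a,b)+\phi_2(b,b^{-1}ab)=\phi_2(a,b)$. For all $x\in X$, $a,b\in G_\lambda$: (2-i) $f_1(x,e_\lambda)=1$; (2-ii) $f_1(x,ab)=f_1(x\triangleleft a,b)f_1(x,a)$; (2-iii) $f_2(x,ab)f_3(a,b)=f_1(x\triangleleft a,b)f_2(x,a)$; (2-iv) $f_2(x,ab)f_4(a,b)=f_2(x\triangleleft a,b)$; (2-$\phi$i) $f_2(x,e_\lambda)\phi_2(e_\lambda,e_\lambda)=\phi_1(x,e_\lambda)$; (2-$\phi$ii) $f_2(x,ab)\phi_2(a,b)+\phi_1(x,ab)=f_1(x\triangleleft a,b)\phi_1(x,a)+\phi_1(x\triangleleft a,b)$. For all $x,y,z\in X$: (3-i) $f_1(x\triangleleft y,z)f_1(x,y)=f_1(x\triangleleft z,y\triangleleft z)f_1(x,z)$; (3-ii) $f_1(x\triangleleft y,z)f_2(x,y)=f_2(x\triangleleft z,y\triangleleft z)f_1(y,z)$; (3-iii) $f_2(x\triangleleft y,z)=f_1(x\triangleleft z,y\triangleleft z)f_2(x,z)+f_2(x\triangleleft z,y\triangleleft z)f_2(y,z)$; (3-$\phi$)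 $f_1(x\triangleleft y,z)\phi_1(x,y)+\phi_1(x\triangleleft y,z)=f_1(x\triangleleft z,y\triangleleft z)\phi_1(x,z)+f_2(x\triangleleft z,y\triangleleft z)\phi_1(y,z)+\phi_1(x\triangleleft z,y\triangleleft z)$. For all $a,b\in G_\lambda$, $x\in X$: (4-i) $f_1(ab,x)f_3(a,b)=f_3(a\triangleleft x,b\triangleleft x)f_1(a,x)$; (4-ii) $f_1(ab,x)f_4(a,b)=f_4(a\triangleleft x,b\triangleleft x)f_1(b,x)$; (4-iii) $f_2(ab,x)=f_3(a\triangleleft x,b\triangleleft x)f_2(a,x)+f_4(a\triangleleft x,b\triangleleft x)f_2(b,x)$; (4-$\phi$) $f_1(ab,x)\phi_2(a,b)+\phi_1(ab,x)=f_3(a\triangleleft x,b\triangleleft x)\phi_1(a,x)+f_4(a\triangleleft x,b\triangleleft x)\phi_1(b,x)+\phi_2(a\triangleleft x,b\triangleleft x)$. *)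

theory Defs
  imports Main
begin

text \<open>We take X to be the whole
type 'x.  grp x is the label of the group containing x, so Lambda = range grp.
mul, iv are the group operations (only meaningful within one group), e l is the
identity of G_l, tri is the quandle operation.\<close>

definition mcq :: "('x \<Rightarrow> 'l) \<Rightarrow> ('x \<Rightarrow> 'x \<Rightarrow> 'x) \<Rightarrow> ('x \<Rightarrow> 'x) \<Rightarrow> ('l \<Rightarrow> 'x)
                   \<Rightarrow> ('x \<Rightarrow> 'x \<Rightarrow> 'x) \<Rightarrow> bool" where
  "mcq grp mul iv e tri \<longleftrightarrow>
     \<comment> \<open>each fibre G_l is a group\<close>
     (\<forall>l\<in>range grp. grp (e l) = l) \<and>
     (\<forall>a b. grp a = grp b \<longrightarrow> grp (mul a b) = grp a) \<and>
     (\<forall>a b c. grp a = grp b \<and> grp b = grp c \<longrightarrow> mul (mul a b) c = mul a (mul b c)) \<and>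
     (\<forall>a. mul (e (grp a)) a = a \<and> mul a (e (grp a)) = a) \<and>
     (\<forall>a. grp (iv a) = grp a \<and> mul (iv a) a = e (grp a) \<and> mul a (iv a) = e (grp a)) \<and>
     \<comment> \<open>(i)\<close>
     (\<forall>a b. grp a = grp b \<longrightarrow> tri a b = mul (mul (iv b) a) b) \<and>
     \<comment> \<open>(ii)\<close>
     (\<forall>x. \<forall>l\<in>range grp. tri x (e l) = x) \<and>
     (\<forall>x a b. grp a = grp b \<longrightarrow> tri x (mul a b) = tri (tri x a) b) \<and>
     \<comment> \<open>(iii)\<close>
     (\<forall>x y z. tri (tri x y) z = tri (tri x z) (tri y z)) \<and>
     \<comment> \<open>(iv)\<close>
     (\<forall>x a b. grp a = grp b \<longrightarrow>
        grp (tri a x) = grp (tri b x) \<and> tri (mul a b) x = mul (tri a x) (tri b x))"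

definition left_module :: "('r::ring_1 \<Rightarrow> 'm::ab_group_add \<Rightarrow> 'm) \<Rightarrow> bool" where
  "left_module sc \<longleftrightarrow>
     (\<forall>r u v. sc r (u + v) = sc r u + sc r v) \<and>
     (\<forall>r s u. sc (r + s) u = sc r u + sc s u) \<and>
     (\<forall>r s u. sc (r * s) u = sc r (sc s u)) \<and>
     (\<forall>u. sc 1 u = u)"

definition ring_invertible :: "'r::ring_1 \<Rightarrow> bool" where
  "ring_invertible r \<longleftrightarrow> (\<exists>s. s * r = 1 \<and> r * s = 1)"

text \<open>Conditions (0-i)--(4-phi).  f3, f4, phi2 are total functions but only their
values on pairs in a common group matter.\<close>
definition conds ::
  "('x \<Rightarrow> 'l) \<Rightarrow> ('x \<Rightarrow> 'x \<Rightarrow> 'x) \<Rightarrow> ('x \<Rightarrow> 'x) \<Rightarrow> ('l \<Rightarrow> 'x) \<Rightarrow> ('x \<Rightarrow> 'x \<Rightarrow> 'x)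
   \<Rightarrow> ('r::ring_1 \<Rightarrow> 'm::ab_group_add \<Rightarrow> 'm)
   \<Rightarrow> ('x \<Rightarrow> 'x \<Rightarrow> 'r) \<Rightarrow> ('x \<Rightarrow> 'x \<Rightarrow> 'r) \<Rightarrow> ('x \<Rightarrow> 'x \<Rightarrow> 'r) \<Rightarrow> ('x \<Rightarrow> 'x \<Rightarrow> 'r)
   \<Rightarrow> ('x \<Rightarrow> 'x \<Rightarrow> 'm) \<Rightarrow> ('x \<Rightarrow> 'x \<Rightarrow> 'm) \<Rightarrow> bool" where
  "conds grp mul iv e tri sc f1 f2 f3 f4 \<phi>1 \<phi>2 \<longleftrightarrow>
     \<comment> \<open>(0-i) .. (0-phi)\<close>
     (\<forall>a b. grp a = grp b \<longrightarrow> ring_invertible (f3 a b) \<and> ring_invertible (f4 a b)) \<and>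
     (\<forall>a b c. grp a = grp b \<and> grp b = grp c \<longrightarrow>
        f3 (mul a b) c * f3 a b = f3 a (mul b c) \<and>
        f3 (mul a b) c * f4 a b = f4 a (mul b c) * f3 b c \<and>
        f4 (mul a b) c = f4 a (mul b c) * f4 b c \<and>
        sc (f3 (mul a b) c) (\<phi>2 a b) + \<phi>2 (mul a b) c
          = sc (f4 a (mul b c)) (\<phi>2 b c) + \<phi>2 a (mul b c)) \<and>
     \<comment> \<open>(1-i), (1-ii), (1-phi)\<close>
     (\<forall>a b. grp a = grp b \<longrightarrow>
        f1 a b = f4 (iv b) (mul a b) * f3 a b \<and>
        f3 b (mul (mul (iv b) a) b) + f4 b (mul (mul (iv b) a) b) * f2 a b = f4 a b \<and>
        sc (f4 b (mul (mul (iv b) a) b)) (\<phi>1 a b) + \<phi>2 b (mul (mul (iv b) a) b) = \<phi>2 a b) \<and>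
     \<comment> \<open>(2-i), (2-phi i)\<close>
     (\<forall>x. \<forall>l\<in>range grp. f1 x (e l) = 1 \<and> sc (f2 x (e l)) (\<phi>2 (e l) (e l)) = \<phi>1 x (e l)) \<and>
     \<comment> \<open>(2-ii), (2-iii), (2-iv), (2-phi ii)\<close>
     (\<forall>x a b. grp a = grp b \<longrightarrow>
        f1 x (mul a b) = f1 (tri x a) b * f1 x a \<and>
        f2 x (mul a b) * f3 a b = f1 (tri x a) b * f2 x a \<and>
        f2 x (mul a b) * f4 a b = f2 (tri x a) b \<and>
        sc (f2 x (mul a b)) (\<phi>2 a b) + \<phi>1 x (mul a b)
          = sc (f1 (tri x a) b) (\<phi>1 x a) + \<phi>1 (tri x a) b) \<and>
     \<comment> \<open>(3-i), (3-ii), (3-iii), (3-phi)\<close>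
     (\<forall>x y z.
        f1 (tri x y) z * f1 x y = f1 (tri x z) (tri y z) * f1 x z \<and>
        f1 (tri x y) z * f2 x y = f2 (tri x z) (tri y z) * f1 y z \<and>
        f2 (tri x y) z = f1 (tri x z) (tri y z) * f2 x z + f2 (tri x z) (tri y z) * f2 y z \<and>
        sc (f1 (tri x y) z) (\<phi>1 x y) + \<phi>1 (tri x y) z
          = sc (f1 (tri x z) (tri y z)) (\<phi>1 x z) + sc (f2 (tri x z) (tri y z)) (\<phi>1 y z)
            + \<phi>1 (tri x z) (tri y z)) \<and>
     \<comment> \<open>(4-i), (4-ii), (4-iii), (4-phi)\<close>
     (\<forall>a b x. grp a = grp b \<longrightarrow>
        f1 (mul a b) x * f3 a b = f3 (tri a x) (tri b x) * f1 a x \<and>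
        f1 (mul a b) x * f4 a b = f4 (tri a x) (tri b x) * f1 b x \<and>
        f2 (mul a b) x = f3 (tri a x) (tri b x) * f2 a x + f4 (tri a x) (tri b x) * f2 b x \<and>
        sc (f1 (mul a b) x) (\<phi>2 a b) + \<phi>1 (mul a b) x
          = sc (f3 (tri a x) (tri b x)) (\<phi>1 a x) + sc (f4 (tri a x) (tri b x)) (\<phi>1 b x)
            + \<phi>2 (tri a x) (tri b x))"

end

theory Submission
  imports Defs
begin

text \<open>Put \<open>\<kappa> x = f3 x x\<inverse>\<close>; by (0-ii) it is a unit with inverse \<open>f3 e\<^sub>x x\<close>.
Think of \<open>f1 x y\<close>, \<open>f2 x y\<close>, \<open>f3 a b\<close>, \<open>f4 a b\<close> as maps from a copy of \<open>R\<close> sitting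
over \<open>x\<close>, \<open>y\<close>, \<open>a\<close>, \<open>b\<close> respectively to the copy over \<open>x \<triangleleft> y\<close> resp. \<open>ab\<close>, and of
\<open>\<phi>1 x y\<close>, \<open>\<phi>2 a b\<close> as vectors over \<open>x \<triangleleft> y\<close> resp. \<open>ab\<close>. Each of the conditions
(0-i)--(4-\<open>\<phi>\<close>) is homogeneous for this bookkeeping, hence survives the gauge transformation
that multiplies each map by \<open>\<kappa>\<close> of its target on the left and by \<open>\<kappa>\<inverse>\<close> of its source
on the right, and each vector by \<open>\<kappa>\<close> of its position. Instances of (0-ii), (0-iii), (1-i)
and (4-i) show that the new tuple is precisely the gauge transform by this \<open>\<kappa>\<close>.\<close>

lemma mult_eq_extend_right: "x * y = z \<Longrightarrow> x * (y * r) = z * (r::'a::semigroup_mult)"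
  by (simp flip: mult.assoc)

lemma ring_invertible_mult:
  fixes r s :: "'r::ring_1"
  assumes "ring_invertible r" "ring_invertible s"
  shows "ring_invertible (r * s)"
proof -
  obtain r' where r': "r' * r = 1" "r * r' = 1" using assms(1) unfolding ring_invertible_def by blast
  obtain s' where s': "s' * s = 1" "s * s' = 1" using assms(2) unfolding ring_invertible_def by blast
  have "(s' * r') * (r * s) = s' * (r' * r) * s" "(r * s) * (s' * r') = r * (s * s') * r'"
    by (simp_all add: mult.assoc)
  then have "(s' * r') * (r * s) = 1" "(r * s) * (s' * r') = 1"
    using r' s' by simp_all
  then show ?thesis unfolding ring_invertible_def by blast
qed

lemma ring_invertible_left_inverse_is_right:
  fixes r s :: "'r::ring_1"
  assumes "ring_invertible r" "s * r = 1"
  shows "r * s = 1"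
proof -
  obtain t where t: "t * r = 1" "r * t = 1" using assms(1) unfolding ring_invertible_def by blast
  have "s = s * (r * t)" using t by simp
  also have "\<dots> = t" using assms(2) by (simp flip: mult.assoc)
  finally show ?thesis using t by simp
qed

lemma ring_invertible_idempotent_eq_one:
  fixes r :: "'r::ring_1"
  assumes "ring_invertible r" "r * r = r"
  shows "r = 1"
proof -
  obtain t where t: "t * r = 1" using assms(1) unfolding ring_invertible_def by blast
  have "r = t * (r * r)" using t by (simp flip: mult.assoc)
  then show ?thesis using assms(2) t by simp
qed

locale multiple_conjugation_quandle =
  fixes grp :: "'x \<Rightarrow> 'l" and mul :: "'x \<Rightarrow> 'x \<Rightarrow> 'x" and iv :: "'x \<Rightarrow> 'x"
    and e :: "'l \<Rightarrow> 'x" and tri :: "'x \<Rightarrow> 'x \<Rightarrow> 'x"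
  assumes mcq: "mcq grp mul iv e tri"
begin

lemma grp_e [simp]: "grp (e (grp x)) = grp x"
  using mcq unfolding mcq_def by (elim conjE) blast

lemma grp_mul [simp]: "grp a = grp b \<Longrightarrow> grp (mul a b) = grp a"
  using mcq unfolding mcq_def by (elim conjE) blast

lemma mul_assoc: "grp a = grp b \<Longrightarrow> grp b = grp c \<Longrightarrow> mul (mul a b) c = mul a (mul b c)"
  using mcq unfolding mcq_def by (elim conjE) blast

lemma mul_e_left [simp]: "mul (e (grp a)) a = a"
  using mcq unfolding mcq_def by (elim conjE) blast

lemma mul_e_right [simp]: "mul a (e (grp a)) = a"
  using mcq unfolding mcq_def by (elim conjE) blast

lemma grp_iv [simp]: "grp (iv a) = grp a"
  using mcq unfolding mcq_def by (elim conjE) blast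

lemma mul_iv_left [simp]: "mul (iv a) a = e (grp a)"
  using mcq unfolding mcq_def by (elim conjE) blast

lemma mul_iv_right [simp]: "mul a (iv a) = e (grp a)"
  using mcq unfolding mcq_def by (elim conjE) blast

lemma tri_same_grp: "grp a = grp b \<Longrightarrow> tri a b = mul (mul (iv b) a) b"
  using mcq unfolding mcq_def by (elim conjE) blast

lemma tri_e [simp]: "tri x (e (grp y)) = x"
  using mcq unfolding mcq_def by (elim conjE) blast

lemma tri_mul: "grp a = grp b \<Longrightarrow> tri x (mul a b) = tri (tri x a) b"
  using mcq unfolding mcq_def by (elim conjE) blast

lemma tri_self_distrib: "tri (tri x y) z = tri (tri x z) (tri y z)"
  using mcq unfolding mcq_def by (elim conjE) blast

lemma grp_tri_eq: "grp a = grp b \<Longrightarrow> grp (tri a x) = grp (tri b x)"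
  using mcq unfolding mcq_def by (elim conjE) meson

lemma tri_mul_distrib: "grp a = grp b \<Longrightarrow> tri (mul a b) x = mul (tri a x) (tri b x)"
  using mcq unfolding mcq_def by (elim conjE) meson

lemma mul_e_left' [simp]: "grp a = grp b \<Longrightarrow> mul (e (grp a)) b = b"
  by (metis mul_e_left)

lemma mul_e_right' [simp]: "grp a = grp b \<Longrightarrow> mul b (e (grp a)) = b"
  by (metis mul_e_right)

lemma mul_iv_mul_cancel [simp]: "grp a = grp b \<Longrightarrow> mul (iv a) (mul a b) = b"
  by (metis grp_iv mul_assoc mul_e_left' mul_iv_left)

lemma mul_mul_iv_cancel [simp]: "grp a = grp b \<Longrightarrow> mul a (mul (iv a) b) = b"
  by (metis grp_iv mul_assoc mul_e_left' mul_iv_right)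

lemma iv_unique:
  assumes "grp a = grp b" "mul a b = e (grp b)"
  shows "a = iv b"
proof -
  have "a = mul a (mul b (iv b))" using assms(1) by simp
  also have "\<dots> = mul (mul a b) (iv b)" using assms(1) by (simp add: mul_assoc)
  finally show ?thesis using assms(2) by simp
qed

lemma e_unique:
  assumes "mul a a = a"
  shows "a = e (grp a)"
proof -
  have "a = mul (iv a) (mul a a)" by simp
  then show ?thesis using assms by simp
qed

lemma iv_iv [simp]: "iv (iv a) = a"
  using iv_unique[of a "iv a"] by simp

lemma iv_mul: "grp a = grp b \<Longrightarrow> iv (mul a b) = mul (iv b) (iv a)"
  by (rule iv_unique[symmetric]) (simp_all add: mul_assoc)

lemma tri_e_left: "tri (e (grp x)) y = e (grp (tri x y))"
proof -
  have "mul (tri (e (grp x)) y) (tri (e (grp x)) y) = tri (e (grp x)) y"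
    by (simp flip: tri_mul_distrib)
  then have "tri (e (grp x)) y = e (grp (tri (e (grp x)) y))" by (rule e_unique)
  also have "grp (tri (e (grp x)) y) = grp (tri x y)" by (rule grp_tri_eq) simp
  finally show ?thesis .
qed

lemma tri_iv: "tri (iv x) y = iv (tri x y)"
proof (rule iv_unique)
  show "grp (tri (iv x) y) = grp (tri x y)" by (rule grp_tri_eq) simp
  have "mul (tri (iv x) y) (tri x y) = tri (mul (iv x) x) y" by (rule tri_mul_distrib[symmetric]) simp
  then show "mul (tri (iv x) y) (tri x y) = e (grp (tri x y))" by (simp add: tri_e_left)
qed

end

locale conds_tuple = multiple_conjugation_quandle +
  fixes sc :: "'r::ring_1 \<Rightarrow> 'm::ab_group_add \<Rightarrow> 'm"
    and f1 f2 f3 f4 :: "'x \<Rightarrow> 'x \<Rightarrow> 'r" and \<phi>1 \<phi>2 :: "'x \<Rightarrow> 'x \<Rightarrow> 'm"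
  assumes left_module: "left_module sc"
    and conds: "conds grp mul iv e tri sc f1 f2 f3 f4 \<phi>1 \<phi>2"
begin

lemma sc_add_right: "sc r (u + v) = sc r u + sc r v"
  using left_module unfolding left_module_def by blast

lemma sc_mult: "sc (r * s) u = sc r (sc s u)"
  using left_module unfolding left_module_def by blast

lemma sc_one [simp]: "sc 1 u = u"
  using left_module unfolding left_module_def by blast

lemma cond_0i_f3: "grp a = grp b \<Longrightarrow> ring_invertible (f3 a b)"
  using conds unfolding conds_def by (elim conjE) blast

lemma cond_0i_f4: "grp a = grp b \<Longrightarrow> ring_invertible (f4 a b)"
  using conds unfolding conds_def by (elim conjE) blast

lemma cond_0ii:
  "grp a = grp b \<Longrightarrow> grp b = grp c \<Longrightarrow> f3 (mul a b) c * f3 a b = f3 a (mul b c)"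
  using conds unfolding conds_def by (elim conjE) blast

lemma cond_0iii:
  "grp a = grp b \<Longrightarrow> grp b = grp c \<Longrightarrow> f3 (mul a b) c * f4 a b = f4 a (mul b c) * f3 b c"
  using conds unfolding conds_def by (elim conjE) blast

lemma cond_0iv:
  "grp a = grp b \<Longrightarrow> grp b = grp c \<Longrightarrow> f4 (mul a b) c = f4 a (mul b c) * f4 b c"
  using conds unfolding conds_def by (elim conjE) blast

lemma cond_0phi:
  "grp a = grp b \<Longrightarrow> grp b = grp c \<Longrightarrow>
    sc (f3 (mul a b) c) (\<phi>2 a b) + \<phi>2 (mul a b) c = sc (f4 a (mul b c)) (\<phi>2 b c) + \<phi>2 a (mul b c)"
  using conds unfolding conds_def by (elim conjE) blast

lemma cond_1i: "grp a = grp b \<Longrightarrow> f1 a b = f4 (iv b) (mul a b) * f3 a b"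
  using conds unfolding conds_def by (elim conjE) blast

lemma cond_1ii:
  "grp a = grp b \<Longrightarrow>
    f3 b (mul (mul (iv b) a) b) + f4 b (mul (mul (iv b) a) b) * f2 a b = f4 a b"
  using conds unfolding conds_def by (elim conjE) blast

lemma cond_1phi:
  "grp a = grp b \<Longrightarrow>
    sc (f4 b (mul (mul (iv b) a) b)) (\<phi>1 a b) + \<phi>2 b (mul (mul (iv b) a) b) = \<phi>2 a b"
  using conds unfolding conds_def by (elim conjE) blast

lemma cond_2i: "f1 x (e (grp y)) = 1"
  using conds unfolding conds_def by (elim conjE) blast

lemma cond_2phi_i: "sc (f2 x (e (grp y))) (\<phi>2 (e (grp y)) (e (grp y))) = \<phi>1 x (e (grp y))"
  using conds unfolding conds_def by (elim conjE) blast

lemma cond_2ii: "grp a = grp b \<Longrightarrow> f1 x (mul a b) = f1 (tri x a) b * f1 x a"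
  using conds unfolding conds_def by (elim conjE) blast

lemma cond_2iii: "grp a = grp b \<Longrightarrow> f2 x (mul a b) * f3 a b = f1 (tri x a) b * f2 x a"
  using conds unfolding conds_def by (elim conjE) blast

lemma cond_2iv: "grp a = grp b \<Longrightarrow> f2 x (mul a b) * f4 a b = f2 (tri x a) b"
  using conds unfolding conds_def by (elim conjE) blast

lemma cond_2phi_ii:
  "grp a = grp b \<Longrightarrow>
    sc (f2 x (mul a b)) (\<phi>2 a b) + \<phi>1 x (mul a b) = sc (f1 (tri x a) b) (\<phi>1 x a) + \<phi>1 (tri x a) b"
  using conds unfolding conds_def by (elim conjE) blast

lemma cond_3i: "f1 (tri x y) z * f1 x y = f1 (tri x z) (tri y z) * f1 x z"
  using conds unfolding conds_def by (elim conjE) blast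

lemma cond_3ii: "f1 (tri x y) z * f2 x y = f2 (tri x z) (tri y z) * f1 y z"
  using conds unfolding conds_def by (elim conjE) blast

lemma cond_3iii:
  "f2 (tri x y) z = f1 (tri x z) (tri y z) * f2 x z + f2 (tri x z) (tri y z) * f2 y z"
  using conds unfolding conds_def by (elim conjE) blast

lemma cond_3phi:
  "sc (f1 (tri x y) z) (\<phi>1 x y) + \<phi>1 (tri x y) z
    = sc (f1 (tri x z) (tri y z)) (\<phi>1 x z) + sc (f2 (tri x z) (tri y z)) (\<phi>1 y z)
      + \<phi>1 (tri x z) (tri y z)"
  using conds unfolding conds_def by (elim conjE) blast

lemma cond_4i: "grp a = grp b \<Longrightarrow> f1 (mul a b) x * f3 a b = f3 (tri a x) (tri b x) * f1 a x"
  using conds unfolding conds_def by (elim conjE) blast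

lemma cond_4ii: "grp a = grp b \<Longrightarrow> f1 (mul a b) x * f4 a b = f4 (tri a x) (tri b x) * f1 b x"
  using conds unfolding conds_def by (elim conjE) blast

lemma cond_4iii:
  "grp a = grp b \<Longrightarrow>
    f2 (mul a b) x = f3 (tri a x) (tri b x) * f2 a x + f4 (tri a x) (tri b x) * f2 b x"
  using conds unfolding conds_def by (elim conjE) blast

lemma cond_4phi:
  "grp a = grp b \<Longrightarrow>
    sc (f1 (mul a b) x) (\<phi>2 a b) + \<phi>1 (mul a b) x
      = sc (f3 (tri a x) (tri b x)) (\<phi>1 a x) + sc (f4 (tri a x) (tri b x)) (\<phi>1 b x)
        + \<phi>2 (tri a x) (tri b x)"
  using conds unfolding conds_def by (elim conjE) blast

lemma f3_e_e [simp]: "f3 (e (grp x)) (e (grp x)) = 1"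
proof (rule ring_invertible_idempotent_eq_one)
  show "ring_invertible (f3 (e (grp x)) (e (grp x)))" by (rule cond_0i_f3) simp
  have "f3 (mul (e (grp x)) (e (grp x))) (e (grp x)) * f3 (e (grp x)) (e (grp x))
      = f3 (e (grp x)) (mul (e (grp x)) (e (grp x)))"
    by (rule cond_0ii) simp_all
  then show "f3 (e (grp x)) (e (grp x)) * f3 (e (grp x)) (e (grp x)) = f3 (e (grp x)) (e (grp x))"
    by simp
qed

lemma f3_gauge_inverse_left [simp]: "f3 x (iv x) * f3 (e (grp x)) x = 1"
proof -
  have "f3 (mul (e (grp x)) x) (iv x) * f3 (e (grp x)) x = f3 (e (grp x)) (mul x (iv x))"
    by (rule cond_0ii) simp_all
  then show ?thesis by simp
qed

lemma f3_gauge_inverse_right [simp]: "f3 (e (grp x)) x * f3 x (iv x) = 1"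
  by (rule ring_invertible_left_inverse_is_right) (simp_all add: cond_0i_f3)

lemma f3_gauge_mul:
  assumes "grp a = grp b"
  shows "f3 (mul a b) (iv (mul a b)) * f3 a b = f3 a (iv a)"
proof -
  have "f3 (mul a b) (iv (mul a b)) * f3 a b = f3 a (mul b (iv (mul a b)))"
    by (rule cond_0ii) (simp_all add: assms)
  then show ?thesis using assms by (simp add: iv_mul)
qed

lemma f4_gauge_mul:
  assumes "grp a = grp b"
  shows "f3 (mul a b) (iv (mul a b)) * f4 a b = f1 (e (grp a)) (iv a) * f3 b (iv b)"
proof -
  have f3_split: "f3 b (mul (iv b) (iv a)) = f3 (e (grp a)) (iv a) * f3 b (iv b)"
  proof -
    have "f3 (mul b (iv b)) (iv a) * f3 b (iv b) = f3 b (mul (iv b) (iv a))"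
      by (rule cond_0ii) (simp_all add: assms)
    then show ?thesis using assms by simp
  qed
  have f1_e: "f1 (e (grp a)) (iv a) = f4 a (iv a) * f3 (e (grp a)) (iv a)"
  proof -
    have "f1 (e (grp a)) (iv a) = f4 (iv (iv a)) (mul (e (grp a)) (iv a)) * f3 (e (grp a)) (iv a)"
      by (rule cond_1i) simp
    then show ?thesis by simp
  qed
  have "f3 (mul a b) (iv (mul a b)) * f4 a b = f4 a (mul b (iv (mul a b))) * f3 b (iv (mul a b))"
    by (rule cond_0iii) (simp_all add: assms)
  also have "\<dots> = f4 a (iv a) * f3 b (mul (iv b) (iv a))"
    using assms by (simp add: iv_mul)
  also have "\<dots> = f1 (e (grp a)) (iv a) * f3 b (iv b)"
    by (simp add: f3_split f1_e mult.assoc)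
  finally show ?thesis .
qed

lemma f1_e_mul_gauge: "f1 (e (grp x)) y * f3 x (iv x) = f3 (tri x y) (iv (tri x y)) * f1 x y"
proof -
  have "f1 (mul x (iv x)) y * f3 x (iv x) = f3 (tri x y) (tri (iv x) y) * f1 x y"
    by (rule cond_4i) simp
  then show ?thesis by (simp add: tri_iv)
qed

lemma f1_e_gauge: "f1 (e (grp x)) y = f3 (tri x y) (iv (tri x y)) * f1 x y * f3 (e (grp x)) x"
  by (simp flip: f1_e_mul_gauge add: mult.assoc)

lemma f3_gauge:
  assumes "grp a = grp b"
  shows "f3 (mul a b) (iv (mul a b)) * f3 a b * f3 (e (grp a)) a = 1"
  using f3_gauge_mul[OF assms] by simp

lemma f4_gauge:
  assumes "grp a = grp b"
  shows "f1 (e (grp a)) (iv a) = f3 (mul a b) (iv (mul a b)) * f4 a b * f3 (e (grp b)) b"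
  using f4_gauge_mul[OF assms] by (simp add: mult.assoc)

end

locale gauge_transform = conds_tuple +
  fixes \<kappa> \<kappa>' :: "'x \<Rightarrow> 'r::ring_1"
    and g1 g2 g3 g4 :: "'x \<Rightarrow> 'x \<Rightarrow> 'r" and \<psi>1 \<psi>2 :: "'x \<Rightarrow> 'x \<Rightarrow> 'm::ab_group_add"
  assumes gauge_inverse_left [simp]: "\<kappa>' x * \<kappa> x = 1"
    and gauge_inverse_right [simp]: "\<kappa> x * \<kappa>' x = 1"
    and g1_gauge: "g1 x y = \<kappa> (tri x y) * f1 x y * \<kappa>' x"
    and g2_gauge: "g2 x y = \<kappa> (tri x y) * f2 x y * \<kappa>' y"
    and g3_gauge: "grp a = grp b \<Longrightarrow> g3 a b = \<kappa> (mul a b) * f3 a b * \<kappa>' a"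
    and g4_gauge: "grp a = grp b \<Longrightarrow> g4 a b = \<kappa> (mul a b) * f4 a b * \<kappa>' b"
    and \<psi>1_gauge: "\<psi>1 x y = sc (\<kappa> (tri x y)) (\<phi>1 x y)"
    and \<psi>2_gauge: "grp a = grp b \<Longrightarrow> \<psi>2 a b = sc (\<kappa> (mul a b)) (\<phi>2 a b)"
begin

lemma gauge_cancel [simp]: "\<kappa>' x * (\<kappa> x * r) = r" "sc (\<kappa>' x) (sc (\<kappa> x) u) = u"
  by (simp_all flip: mult.assoc sc_mult)

lemma gauge_invertible: "ring_invertible (\<kappa> x)" "ring_invertible (\<kappa>' x)"
  using gauge_inverse_left gauge_inverse_right unfolding ring_invertible_def by blast+

lemmas gauge_simps = g1_gauge g2_gauge g3_gauge g4_gauge \<psi>1_gauge \<psi>2_gauge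
  mult.assoc ring_distribs sc_mult

text \<open>Once the gauges cancel in pairs, each gauged condition is the original one inside a
\<open>\<kappa>\<close>-conjugate, so the corresponding instance of the original condition, used as a rewrite
rule (with an extra right factor when both of its sides are products), closes the goal.\<close>

lemma gauged_cond_0:
  assumes "grp a = grp b" "grp b = grp c"
  shows "ring_invertible (g3 a b)" and "ring_invertible (g4 a b)"
    and "g3 (mul a b) c * g3 a b = g3 a (mul b c)"
    and "g3 (mul a b) c * g4 a b = g4 a (mul b c) * g3 b c"
    and "g4 (mul a b) c = g4 a (mul b c) * g4 b c"
    and "sc (g3 (mul a b) c) (\<psi>2 a b) + \<psi>2 (mul a b) c
          = sc (g4 a (mul b c)) (\<psi>2 b c) + \<psi>2 a (mul b c)"
  using assms cond_0ii[OF assms, symmetric] cond_0iii[OF assms, THEN mult_eq_extend_right]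
    cond_0iv[OF assms] cond_0phi[OF assms]
  by (simp_all add: gauge_simps mul_assoc ring_invertible_mult gauge_invertible
      cond_0i_f3 cond_0i_f4 flip: sc_add_right)

lemma gauged_cond_1:
  assumes "grp a = grp b"
  shows "g1 a b = g4 (iv b) (mul a b) * g3 a b"
    and "g3 b (mul (mul (iv b) a) b) + g4 b (mul (mul (iv b) a) b) * g2 a b = g4 a b"
    and "sc (g4 b (mul (mul (iv b) a) b)) (\<psi>1 a b) + \<psi>2 b (mul (mul (iv b) a) b) = \<psi>2 a b"
  using assms cond_1i[OF assms] cond_1ii[OF assms, symmetric] cond_1phi[OF assms]
  by (simp_all add: gauge_simps mul_assoc tri_same_grp flip: sc_add_right)

lemma gauged_cond_2_e:
  shows "g1 x (e (grp y)) = 1"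
    and "sc (g2 x (e (grp y))) (\<psi>2 (e (grp y)) (e (grp y))) = \<psi>1 x (e (grp y))"
  by (simp_all add: gauge_simps cond_2i cond_2phi_i)

lemma gauged_cond_2:
  assumes "grp a = grp b"
  shows "g1 x (mul a b) = g1 (tri x a) b * g1 x a"
    and "g2 x (mul a b) * g3 a b = g1 (tri x a) b * g2 x a"
    and "g2 x (mul a b) * g4 a b = g2 (tri x a) b"
    and "sc (g2 x (mul a b)) (\<psi>2 a b) + \<psi>1 x (mul a b)
          = sc (g1 (tri x a) b) (\<psi>1 x a) + \<psi>1 (tri x a) b"
  using assms cond_2ii[OF assms] cond_2iii[OF assms, THEN mult_eq_extend_right]
    cond_2iv[OF assms, THEN mult_eq_extend_right] cond_2phi_ii[OF assms]
  by (simp_all add: gauge_simps tri_mul flip: sc_add_right)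

lemma gauged_cond_3:
  shows "g1 (tri x y) z * g1 x y = g1 (tri x z) (tri y z) * g1 x z"
    and "g1 (tri x y) z * g2 x y = g2 (tri x z) (tri y z) * g1 y z"
    and "g2 (tri x y) z = g1 (tri x z) (tri y z) * g2 x z + g2 (tri x z) (tri y z) * g2 y z"
    and "sc (g1 (tri x y) z) (\<psi>1 x y) + \<psi>1 (tri x y) z
          = sc (g1 (tri x z) (tri y z)) (\<psi>1 x z) + sc (g2 (tri x z) (tri y z)) (\<psi>1 y z)
            + \<psi>1 (tri x z) (tri y z)"
  using tri_self_distrib[of x y z] cond_3i[THEN mult_eq_extend_right, of x y z]
    cond_3ii[THEN mult_eq_extend_right, of x y z] cond_3iii[of x y z] cond_3phi[of x y z]
  by (simp_all add: gauge_simps flip: sc_add_right)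

lemma gauged_cond_4:
  assumes "grp a = grp b"
  shows "g1 (mul a b) x * g3 a b = g3 (tri a x) (tri b x) * g1 a x"
    and "g1 (mul a b) x * g4 a b = g4 (tri a x) (tri b x) * g1 b x"
    and "g2 (mul a b) x = g3 (tri a x) (tri b x) * g2 a x + g4 (tri a x) (tri b x) * g2 b x"
    and "sc (g1 (mul a b) x) (\<psi>2 a b) + \<psi>1 (mul a b) x
          = sc (g3 (tri a x) (tri b x)) (\<psi>1 a x) + sc (g4 (tri a x) (tri b x)) (\<psi>1 b x)
            + \<psi>2 (tri a x) (tri b x)"
  using assms grp_tri_eq[OF assms] cond_4i[OF assms, THEN mult_eq_extend_right]
    cond_4ii[OF assms, THEN mult_eq_extend_right] cond_4iii[OF assms] cond_4phi[OF assms]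
  by (simp_all add: gauge_simps tri_mul_distrib flip: sc_add_right)

theorem gauge_transform_conds: "conds grp mul iv e tri sc g1 g2 g3 g4 \<psi>1 \<psi>2"
  unfolding conds_def
  by (auto intro: gauged_cond_0 gauged_cond_1 gauged_cond_2_e gauged_cond_2 gauged_cond_3
      gauged_cond_4)

end

theorem lemma4p2:
  fixes grp :: "'x \<Rightarrow> 'l" and mul :: "'x \<Rightarrow> 'x \<Rightarrow> 'x" and iv :: "'x \<Rightarrow> 'x"
    and e :: "'l \<Rightarrow> 'x" and tri :: "'x \<Rightarrow> 'x \<Rightarrow> 'x"
    and sc :: "'r::ring_1 \<Rightarrow> 'm::ab_group_add \<Rightarrow> 'm"
    and f1 f2 f3 f4 :: "'x \<Rightarrow> 'x \<Rightarrow> 'r" and \<phi>1 \<phi>2 :: "'x \<Rightarrow> 'x \<Rightarrow> 'm"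
  assumes "mcq grp mul iv e tri"
    and "left_module sc"
    and "conds grp mul iv e tri sc f1 f2 f3 f4 \<phi>1 \<phi>2"
  shows "conds grp mul iv e tri sc
           (\<lambda>x y. f1 (e (grp x)) y)
           (\<lambda>x y. f3 (tri x y) (tri (iv x) y) * f2 x y * f3 (e (grp y)) y)
           (\<lambda>a b. 1)
           (\<lambda>a b. f1 (e (grp a)) (iv a))
           (\<lambda>x y. sc (f3 (tri x y) (tri (iv x) y)) (\<phi>1 x y))
           (\<lambda>a b. sc (f3 (mul a b) (mul (iv b) (iv a))) (\<phi>2 a b))"
proof -
  interpret conds_tuple grp mul iv e tri sc f1 f2 f3 f4 \<phi>1 \<phi>2
    using assms by unfold_locales
  interpret gauge_transform grp mul iv e tri sc f1 f2 f3 f4 \<phi>1 \<phi>2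
      "\<lambda>x. f3 x (iv x)" "\<lambda>x. f3 (e (grp x)) x"
      "\<lambda>x y. f1 (e (grp x)) y"
      "\<lambda>x y. f3 (tri x y) (tri (iv x) y) * f2 x y * f3 (e (grp y)) y"
      "\<lambda>a b. 1" "\<lambda>a b. f1 (e (grp a)) (iv a)"
      "\<lambda>x y. sc (f3 (tri x y) (tri (iv x) y)) (\<phi>1 x y)"
      "\<lambda>a b. sc (f3 (mul a b) (mul (iv b) (iv a))) (\<phi>2 a b)"
    by unfold_locales (rule f1_e_gauge f3_gauge[symmetric] f4_gauge | simp add: tri_iv iv_mul)+
  show ?thesis by (rule gauge_transform_conds)
qed

end
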